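(* Let $P \subset \mathbb{R}$ be a finite or countably infinite discrete set (containing none of its accumulation points). Let $\mathcal{H} = \ell^2(P)$ with orthonormal basis $(\psi_\lambda)_{\lambda\in P}$, and let $K$ be the self-adjoint (possibly unbounded) operator on $\mathcal{H}$ with $K\psi_\lambda = \lambda\psi_\lambda$ for all $\lambda\in P$ (defined on its maximal domain). Let $v\in\mathcal{H}$ be a cyclic vector for $K$, i.e. $v$ lies in $\bigcap_{n\ge 0}\operatorname{Dom}(K^n)$ and the span of $\{v, Kv, K^2v,\dots\}$ is dense in $\mathcal{H}$. On $\tilde{\mathcal H} = \mathcal{H}\oplus\mathbb{C}$ define the self-adjoint operators $$A(x\oplus\alpha) = (Kx + \alpha v)\oplus \langle v, x\rangle,\quad x\in\operatorname{Dom}(K),\ \alpha\in\mathbb{C},\qquad B(x\oplus\alpha) = 0\oplus\alpha,$$ i.e. $A = \begin{pmatrix} K & v\\ \langle v,\cdot\rangle & 0\end{pmatrix}$ and $B = \begin{pmatrix} 0&0\\0&1\end{pmatrix}$. Then $$\bigcup_{t \in \mathbb{R}} \sigma(A+tB) = \mathbb{R} \setminus P.$$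
   Context: $\sigma(T)$ denotes the spectrum of an operator $T$. The inner product $\langle\cdot,\cdot\rangle$ is linear in the second argument. *)

theory Defs
  imports "HOL-Analysis.Analysis"
begin

text \<open>Concrete model of the Hilbert space l2(P), P a subset of the reals:
  functions real => complex vanishing outside P with square-summable moduli on P.
  The basis vector psi_lambda is the indicator of lambda.\<close>

definition l2 :: "real set \<Rightarrow> (real \<Rightarrow> complex) set" where
  "l2 P = {x. (\<forall>l. l \<notin> P \<longrightarrow> x l = 0) \<and> (\<lambda>l. (cmod (x l))\<^sup>2) summable_on P}"

definition l2norm :: "real set \<Rightarrow> (real \<Rightarrow> complex) \<Rightarrow> real" where
  "l2norm P x = sqrt (\<Sum>\<^sub>\<infinity>l\<in>P. (cmod (x l))\<^sup>2)"

text \<open>Inner product, linear in the second argument.\<close>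
definition l2inner :: "real set \<Rightarrow> (real \<Rightarrow> complex) \<Rightarrow> (real \<Rightarrow> complex) \<Rightarrow> complex" where
  "l2inner P v x = (\<Sum>\<^sub>\<infinity>l\<in>P. cnj (v l) * x l)"

definition multK :: "(real \<Rightarrow> complex) \<Rightarrow> (real \<Rightarrow> complex)" where
  "multK x = (\<lambda>l. complex_of_real l * x l)"

definition domK :: "real set \<Rightarrow> (real \<Rightarrow> complex) set" where
  "domK P = {x \<in> l2 P. multK x \<in> l2 P}"

definition cyclic_vec :: "real set \<Rightarrow> (real \<Rightarrow> complex) \<Rightarrow> bool" where
  "cyclic_vec P v \<longleftrightarrow>
     v \<in> l2 P \<and> (\<forall>n. (multK ^^ n) v \<in> l2 P) \<and>
     (\<forall>x \<in> l2 P. \<forall>e>0. \<exists>N (c :: nat \<Rightarrow> complex).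
        l2norm P (\<lambda>l. x l - (\<Sum>n<N. c n * (multK ^^ n) v l)) < e)"

type_synonym vecT = "(real \<Rightarrow> complex) \<times> complex"

definition Ht :: "real set \<Rightarrow> vecT set" where
  "Ht P = l2 P \<times> UNIV"

definition normT :: "real set \<Rightarrow> vecT \<Rightarrow> real" where
  "normT P u = sqrt ((l2norm P (fst u))\<^sup>2 + (cmod (snd u))\<^sup>2)"

definition addT :: "vecT \<Rightarrow> vecT \<Rightarrow> vecT" where
  "addT u w = (\<lambda>l. fst u l + fst w l, snd u + snd w)"

definition scaleT :: "complex \<Rightarrow> vecT \<Rightarrow> vecT" where
  "scaleT z u = (\<lambda>l. z * fst u l, z * snd u)"

definition opA :: "real set \<Rightarrow> (real \<Rightarrow> complex) \<Rightarrow> vecT \<Rightarrow> vecT" where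
  "opA P v u = (\<lambda>l. multK (fst u) l + snd u * v l, l2inner P v (fst u))"

definition opB :: "vecT \<Rightarrow> vecT" where
  "opB u = (\<lambda>l. 0, snd u)"

text \<open>Spectrum of an (unbounded) operator T with domain D in H~: z is in the resolvent set
  iff T - z is a bijection of D onto H~ with bounded inverse.\<close>
definition specT :: "real set \<Rightarrow> vecT set \<Rightarrow> (vecT \<Rightarrow> vecT) \<Rightarrow> complex set" where
  "specT P D T = {z. \<not> (bij_betw (\<lambda>u. addT (T u) (scaleT (- z) u)) D (Ht P) \<and>
       (\<exists>C. \<forall>u\<in>D. normT P u \<le> C * normT P (addT (T u) (scaleT (- z) u))))}"

end

(* The operator A + t B - z sends x (+) alpha to ((K - z) x + alpha v) (+) (<v, x> + (t - z) alpha).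

   For non-real z it is bounded below by |Im z|, since Im <u, (A + t B - z) u> = - Im z |u|^2, and
   it is onto, because the equation can be solved with the resolvent of K.  At a point lambda0 of P,
   which is isolated, v(lambda0) is nonzero by cyclicity: the lambda0-component of the equation
   determines alpha, the rest is solved with the resolvent of K on P - {lambda0}, and again the
   inverse is bounded.  At a real r outside P at positive distance from P, the Weyl function
   F(r) = <v, (K - r)^-1 v> is real, and for t = r + F(r) the vector (-(K - r)^-1 v) (+) 1 lies in
   the kernel.  At an accumulation point r of P the basis vectors psi_lambda with lambda near r and
   |v(lambda)| small are almost annihilated, so there is no bounded inverse for any t. *)

theory Submission
  imports Defs
begin

section \<open>The space \<open>l2(P)\<close>\<close>

definition l2sq :: "real set \<Rightarrow> (real \<Rightarrow> complex) \<Rightarrow> real" where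
  "l2sq P x = (\<Sum>\<^sub>\<infinity>l\<in>P. (cmod (x l))\<^sup>2)"

definition psi :: "real \<Rightarrow> real \<Rightarrow> complex" where
  "psi l0 = (\<lambda>l. if l = l0 then 1 else 0)"

lemma l2_vanishes: "x \<in> l2 P \<Longrightarrow> l \<notin> P \<Longrightarrow> x l = 0"
  by (simp add: l2_def)

lemma l2_summable: "x \<in> l2 P \<Longrightarrow> (\<lambda>l. (cmod (x l))\<^sup>2) summable_on P"
  by (simp add: l2_def)

lemma l2sq_nonneg: "0 \<le> l2sq P x"
  unfolding l2sq_def by (rule infsum_nonneg) simp

lemma zero_in_l2: "(\<lambda>_. 0) \<in> l2 P"
  by (simp add: l2_def)

lemma l2sq_zero [simp]: "l2sq P (\<lambda>_. 0) = 0"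
  by (simp add: l2sq_def)

lemma normT_eq: "normT P u = sqrt (l2sq P (fst u) + (cmod (snd u))\<^sup>2)"
  by (simp add: normT_def l2norm_def l2sq_def[symmetric] l2sq_nonneg)

lemma normT_sq: "(normT P u)\<^sup>2 = l2sq P (fst u) + (cmod (snd u))\<^sup>2"
  by (simp add: normT_eq l2sq_nonneg)

lemma norm_le_l2sq:
  assumes "x \<in> l2 P" "l \<in> P"
  shows "(cmod (x l))\<^sup>2 \<le> l2sq P x"
proof -
  have "(\<Sum>k\<in>{l}. (cmod (x k))\<^sup>2) \<le> l2sq P x"
    unfolding l2sq_def using assms by (intro finite_sum_le_infsum l2_summable) auto
  then show ?thesis by simp
qed

lemma l2sq_eq_0_imp_zero:
  assumes "x \<in> l2 P" "l2sq P x = 0"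
  shows "x l = 0"
  using norm_le_l2sq[OF assms(1), of l] assms l2_vanishes by (cases "l \<in> P") auto

lemma l2sq_scale: "l2sq P (\<lambda>l. c * x l) = (cmod c)\<^sup>2 * l2sq P x"
  by (simp add: l2sq_def norm_mult power_mult_distrib infsum_cmult_right')

lemma l2_dominated:
  assumes "\<And>l. l \<notin> P \<Longrightarrow> x l = 0" "y \<in> l2 P" "w \<in> l2 P"
    and "\<And>l. l \<in> P \<Longrightarrow> cmod (x l) \<le> a * cmod (y l) + b * cmod (w l)"
  shows "x \<in> l2 P" and "l2sq P x \<le> 2 * a\<^sup>2 * l2sq P y + 2 * b\<^sup>2 * l2sq P w"
proof -
  define g where "g l = 2 * a\<^sup>2 * (cmod (y l))\<^sup>2 + 2 * b\<^sup>2 * (cmod (w l))\<^sup>2" for l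
  have g: "g summable_on P"
    unfolding g_def using assms(2,3) by (intro summable_on_add summable_on_cmult_right l2_summable)
  have le_g: "(cmod (x l))\<^sup>2 \<le> g l" if "l \<in> P" for l
  proof -
    have "(cmod (x l))\<^sup>2 \<le> (a * cmod (y l) + b * cmod (w l))\<^sup>2"
      using assms(4)[OF that] by (intro power_mono) auto
    also have "\<dots> \<le> g l"
      unfolding g_def using sum_squares_bound[of "a * cmod (y l)" "b * cmod (w l)"]
      by (simp add: power2_sum power_mult_distrib)
    finally show ?thesis .
  qed
  have x: "(\<lambda>l. (cmod (x l))\<^sup>2) summable_on P"
    using g le_g by (rule summable_on_comparison_test) auto
  then show "x \<in> l2 P"
    using assms(1) by (simp add: l2_def)
  have "l2sq P x \<le> infsum g P"
    unfolding l2sq_def using x g le_g by (rule infsum_mono)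
  also have "\<dots> = 2 * a\<^sup>2 * l2sq P y + 2 * b\<^sup>2 * l2sq P w"
    unfolding g_def l2sq_def using assms(2,3)
    by (simp add: infsum_add summable_on_cmult_right infsum_cmult_right l2_summable)
  finally show "l2sq P x \<le> 2 * a\<^sup>2 * l2sq P y + 2 * b\<^sup>2 * l2sq P w" .
qed

lemma l2_lincomb:
  assumes "x \<in> l2 P" "y \<in> l2 P"
  shows "(\<lambda>l. a * x l + b * y l) \<in> l2 P"
proof (rule l2_dominated(1)[of P _ x y "cmod a" "cmod b"])
  show "cmod (a * x l + b * y l) \<le> cmod a * cmod (x l) + cmod b * cmod (y l)" for l
    using norm_triangle_ineq[of "a * x l" "b * y l"] by (simp add: norm_mult)
qed (use assms in \<open>auto simp: l2_vanishes\<close>)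

lemma l2_sum:
  fixes N :: nat
  assumes "\<And>n. n < N \<Longrightarrow> f n \<in> l2 P"
  shows "(\<lambda>l. \<Sum>n<N. c n * f n l) \<in> l2 P"
  using assms
proof (induction N)
  case 0
  then show ?case by (simp add: zero_in_l2)
next
  case (Suc N)
  then have "(\<lambda>l. 1 * (\<Sum>n<N. c n * f n l) + c N * f N l) \<in> l2 P"
    by (intro l2_lincomb) auto
  then show ?case by simp
qed

lemma l2_restrict:
  assumes "y \<in> l2 P" "Q \<subseteq> P"
  shows "(\<lambda>l. if l \<in> Q then y l else 0) \<in> l2 Q"
proof -
  have "(\<lambda>l. (cmod (y l))\<^sup>2) summable_on Q"
    using l2_summable[OF assms(1)] assms(2) by (rule summable_on_subset)
  then have "(\<lambda>l. (cmod (if l \<in> Q then y l else 0))\<^sup>2) summable_on Q"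
    by (rule summable_on_cong[THEN iffD1, rotated]) simp
  then show ?thesis
    by (simp add: l2_def)
qed

lemma finite_ge_if_summable:
  fixes f :: "'a \<Rightarrow> real"
  assumes "f summable_on A" "\<And>x. x \<in> A \<Longrightarrow> 0 \<le> f x" "0 < e"
  shows "finite {x \<in> A. e \<le> f x}"
proof (rule ccontr)
  assume "infinite {x \<in> A. e \<le> f x}"
  obtain n :: nat where n: "infsum f A / e < n"
    using reals_Archimedean2 by blast
  obtain B where B: "finite B" "card B = n" "B \<subseteq> {x \<in> A. e \<le> f x}"
    using infinite_arbitrarily_large[OF \<open>infinite _\<close>] by blast
  have "n * e = (\<Sum>x\<in>B. e)"
    using B by simp
  also have "\<dots> \<le> sum f B"
    using B by (intro sum_mono) auto
  also have "\<dots> \<le> infsum f A"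
    using B assms by (intro finite_sum_le_infsum) auto
  finally show False
    using n assms(3) by (simp add: field_simps)
qed

lemma mult_le_weighted_sum_squares:
  fixes p q s :: real
  assumes "0 < s"
  shows "p * q \<le> (s * p\<^sup>2 + q\<^sup>2 / s) / 2"
proof -
  have "2 * (s * p) * q \<le> (s * p)\<^sup>2 + q\<^sup>2"
    by (rule sum_squares_bound)
  then show ?thesis
    using assms by (simp add: field_simps power2_eq_square)
qed

lemma norm_add_sq_le:
  fixes p q :: "'a::real_normed_vector"
  shows "(norm (p + q))\<^sup>2 \<le> 2 * (norm p)\<^sup>2 + 2 * (norm q)\<^sup>2"
proof -
  have "(norm (p + q))\<^sup>2 \<le> (norm p + norm q)\<^sup>2"
    by (intro power_mono norm_triangle_ineq) simp
  also have "\<dots> \<le> 2 * (norm p)\<^sup>2 + 2 * (norm q)\<^sup>2"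
    using sum_squares_bound[of "norm p" "norm q"] by (simp add: power2_sum)
  finally show ?thesis .
qed

lemma cnj_mult_self: "cnj w * w = of_real ((cmod w)\<^sup>2)"
  using complex_norm_square[of w] by (simp add: mult.commute)

lemma l2_inner_summable:
  assumes "w \<in> l2 P" "x \<in> l2 P"
  shows "(\<lambda>l. cnj (w l) * x l) summable_on P"
proof -
  have bound: "cmod (cnj (w l) * x l) \<le> 1/2 * ((cmod (w l))\<^sup>2 + (cmod (x l))\<^sup>2)" for l
    using sum_squares_bound[of "cmod (w l)" "cmod (x l)"] by (simp add: norm_mult)
  have "(\<lambda>l. 1/2 * ((cmod (w l))\<^sup>2 + (cmod (x l))\<^sup>2)) summable_on P"
    using assms by (intro summable_on_cmult_right summable_on_add l2_summable)
  then have "(\<lambda>l. cmod (cnj (w l) * x l)) summable_on P"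
    using bound by (rule summable_on_comparison_test) simp
  then show ?thesis
    by (rule abs_summable_summable)
qed

lemma l2inner_zero: "l2inner P v (\<lambda>_. 0) = 0"
  by (simp add: l2inner_def)

lemma l2inner_swap: "l2inner P x v = cnj (l2inner P v x)"
  unfolding l2inner_def infsum_cnj[symmetric] by (simp add: mult.commute)

lemma l2inner_lincomb:
  assumes "w \<in> l2 P" "x \<in> l2 P" "y \<in> l2 P"
  shows "l2inner P w (\<lambda>l. a * x l + b * y l) = a * l2inner P w x + b * l2inner P w y"
proof -
  have "l2inner P w (\<lambda>l. a * x l + b * y l)
      = (\<Sum>\<^sub>\<infinity>l\<in>P. a * (cnj (w l) * x l) + b * (cnj (w l) * y l))"
    unfolding l2inner_def by (simp add: algebra_simps)
  also have "\<dots> = a * l2inner P w x + b * l2inner P w y"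
    unfolding l2inner_def using assms
    by (simp add: infsum_add summable_on_cmult_right l2_inner_summable infsum_cmult_right)
  finally show ?thesis .
qed

lemma cmod_l2inner_le_weighted:
  assumes "w \<in> l2 P" "x \<in> l2 P" "0 < s"
  shows "cmod (l2inner P w x) \<le> (s * l2sq P w + l2sq P x / s) / 2"
proof -
  have abs: "(\<lambda>l. cmod (cnj (w l) * x l)) summable_on P"
    using l2_inner_summable[OF assms(1,2)]
      summable_on_iff_abs_summable_on_complex[of "\<lambda>l. cnj (w l) * x l" P] by simp
  have bound: "(\<lambda>l. 1/2 * (s * (cmod (w l))\<^sup>2 + 1/s * (cmod (x l))\<^sup>2)) summable_on P"
    using assms by (intro summable_on_add summable_on_cmult_right l2_summable)
  have "cmod (l2inner P w x) \<le> (\<Sum>\<^sub>\<infinity>l\<in>P. cmod (cnj (w l) * x l))"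
    unfolding l2inner_def by (rule norm_infsum_bound[OF abs])
  also have "\<dots> \<le> (\<Sum>\<^sub>\<infinity>l\<in>P. 1/2 * (s * (cmod (w l))\<^sup>2 + 1/s * (cmod (x l))\<^sup>2))"
    using abs bound by (rule infsum_mono)
      (use mult_le_weighted_sum_squares[OF assms(3)] in \<open>simp add: norm_mult\<close>)
  also have "\<dots> = 1/2 * (s * l2sq P w + 1/s * l2sq P x)"
    using assms unfolding l2sq_def
    by (simp only: infsum_cmult_right' infsum_add summable_on_cmult_right l2_summable)
  finally show ?thesis
    by simp
qed

lemma cmod_l2inner_sq_le:
  assumes "w \<in> l2 P" "x \<in> l2 P"
  shows "(cmod (l2inner P w x))\<^sup>2 \<le> l2sq P w * l2sq P x"
proof (cases "l2sq P w = 0 \<or> l2sq P x = 0")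
  case True
  then have "l2inner P w x = 0"
    using l2sq_eq_0_imp_zero assms unfolding l2inner_def by (auto intro: infsum_0)
  then show ?thesis
    by (simp add: l2sq_nonneg)
next
  case False
  define a b where "a = sqrt (l2sq P w)" and "b = sqrt (l2sq P x)"
  have ab: "0 < a" "0 < b" "l2sq P w = a\<^sup>2" "l2sq P x = b\<^sup>2"
    using False l2sq_nonneg[of P w] l2sq_nonneg[of P x] by (auto simp: a_def b_def)
  have "cmod (l2inner P w x) \<le> (b / a * a\<^sup>2 + b\<^sup>2 / (b / a)) / 2"
    using cmod_l2inner_le_weighted[OF assms, of "b / a"] ab by simp
  also have "\<dots> = a * b"
    using ab by (simp add: field_simps power2_eq_square)
  finally have "(cmod (l2inner P w x))\<^sup>2 \<le> (a * b)\<^sup>2"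
    by (intro power_mono) auto
  then show ?thesis
    using ab by (simp add: power_mult_distrib)
qed

lemma psi_in_l2: "l0 \<in> P \<Longrightarrow> psi l0 \<in> l2 P"
  and l2sq_psi: "l0 \<in> P \<Longrightarrow> l2sq P (psi l0) = 1"
  and l2inner_psi: "l0 \<in> P \<Longrightarrow> l2inner P w (psi l0) = cnj (w l0)"
proof -
  assume l0: "l0 \<in> P"
  have "f summable_on P \<and> infsum f P = f l0"
    if "\<And>l. l \<noteq> l0 \<Longrightarrow> f l = 0" for f :: "real \<Rightarrow> 'a::{comm_monoid_add, t2_space}"
    using has_sum_finite_neutralI[of "{l0}" P f "f l0"] that l0 by (simp add: has_sum_iff)
  from this[of "\<lambda>l. (cmod (psi l0 l))\<^sup>2"] this[of "\<lambda>l. cnj (w l) * psi l0 l"]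
  show "psi l0 \<in> l2 P" "l2sq P (psi l0) = 1" "l2inner P w (psi l0) = cnj (w l0)"
    using l0 by (auto simp: l2_def l2sq_def l2inner_def psi_def)
qed

lemma l2sq_le_remove_point:
  assumes "x \<in> l2 P" "l0 \<in> P"
  shows "l2sq P x \<le> 2 * l2sq P (\<lambda>l. if l = l0 then 0 else x l) + 2 * (cmod (x l0))\<^sup>2"
proof -
  have "(\<lambda>l. if l = l0 then 0 else x l) = (\<lambda>l. 1 * x l + (- x l0) * psi l0 l)"
    by (simp add: psi_def fun_eq_iff)
  then have x': "(\<lambda>l. if l = l0 then 0 else x l) \<in> l2 P"
    using l2_lincomb[OF assms(1) psi_in_l2[OF assms(2)], of 1 "- x l0"] by simp
  have "l2sq P x \<le> 2 * 1\<^sup>2 * l2sq P (\<lambda>l. if l = l0 then 0 else x l) + 2 * (cmod (x l0))\<^sup>2 * l2sq P (psi l0)"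
    by (rule l2_dominated(2)[OF _ x' psi_in_l2[OF assms(2)]])
      (use assms l2_vanishes in \<open>auto simp: psi_def\<close>)
  then show ?thesis
    by (simp add: l2sq_psi assms(2))
qed

section \<open>The operator \<open>K\<close> and its resolvent\<close>

lemma domK_lincomb:
  assumes "x \<in> domK P" "y \<in> domK P"
  shows "(\<lambda>l. a * x l + b * y l) \<in> domK P"
proof -
  have "multK (\<lambda>l. a * x l + b * y l) = (\<lambda>l. a * multK x l + b * multK y l)"
    by (simp add: multK_def fun_eq_iff algebra_simps)
  then show ?thesis
    using assms by (simp add: domK_def l2_lincomb)
qed

lemma zero_in_domK: "(\<lambda>_. 0) \<in> domK P"
  by (simp add: domK_def multK_def l2_def)

lemma psi_in_domK: "l0 \<in> P \<Longrightarrow> psi l0 \<in> domK P"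
proof -
  assume l0: "l0 \<in> P"
  have "multK (psi l0) = (\<lambda>l. of_real l0 * psi l0 l + 0 * psi l0 l)"
    by (simp add: multK_def psi_def fun_eq_iff)
  then show ?thesis
    using l2_lincomb[OF psi_in_l2[OF l0] psi_in_l2[OF l0], of "of_real l0" 0] l0
    by (simp add: domK_def psi_in_l2)
qed

lemma domK_mono:
  assumes "Q \<subseteq> P" "x \<in> domK Q"
  shows "x \<in> domK P"
proof -
  have "y \<in> l2 P" if "y \<in> l2 Q" for y
  proof -
    have "(\<lambda>l. (cmod (y l))\<^sup>2) summable_on P \<longleftrightarrow> (\<lambda>l. (cmod (y l))\<^sup>2) summable_on Q"
      using l2_vanishes[OF that] assms(1) by (intro summable_on_cong_neutral) auto
    then have "(\<lambda>l. (cmod (y l))\<^sup>2) summable_on P"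
      using l2_summable[OF that] by simp
    moreover have "y l = 0" if "l \<notin> P" for l
      using l2_vanishes[OF \<open>y \<in> l2 Q\<close>] that assms(1) by blast
    ultimately show ?thesis
      by (simp add: l2_def)
  qed
  then show ?thesis
    using assms(2) by (simp add: domK_def)
qed

lemma funpow_multK: "(multK ^^ n) v l = of_real l ^ n * v l"
  by (induction n) (auto simp: multK_def)

lemma cyclic_vec_nonzero:
  assumes cyclic: "cyclic_vec P v" and l0: "l0 \<in> P"
  shows "v l0 \<noteq> 0"
proof
  assume v0: "v l0 = 0"
  obtain N c where approx: "l2norm P (\<lambda>l. psi l0 l - (\<Sum>n<N. c n * (multK ^^ n) v l)) < 1"
    using cyclic psi_in_l2[OF l0] unfolding cyclic_vec_def by (meson zero_less_one)
  define g where "g = (\<lambda>l. 1 * psi l0 l + (- 1) * (\<Sum>n<N. c n * (multK ^^ n) v l))"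
  have "g \<in> l2 P"
    unfolding g_def using cyclic psi_in_l2[OF l0]
    by (intro l2_lincomb l2_sum) (auto simp: cyclic_vec_def)
  moreover have "g l0 = 1"
    by (simp add: g_def psi_def funpow_multK v0)
  ultimately have "1 \<le> l2sq P g"
    using norm_le_l2sq[of g P l0] l0 by simp
  moreover have "l2sq P g < 1"
    using approx l2sq_nonneg[of P g] by (simp add: g_def l2norm_def l2sq_def[symmetric])
  ultimately show False
    by simp
qed

definition resolventK :: "real set \<Rightarrow> complex \<Rightarrow> (real \<Rightarrow> complex) \<Rightarrow> real \<Rightarrow> complex" where
  "resolventK P z y = (\<lambda>l. if l \<in> P then y l / (of_real l - z) else 0)"

lemma resolventK_in_domK:
  assumes "0 < d" "\<And>l. l \<in> P \<Longrightarrow> d \<le> cmod (of_real l - z)" "y \<in> l2 P"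
  shows "resolventK P z y \<in> domK P"
proof -
  have bound: "cmod (resolventK P z y l) \<le> 1 / d * cmod (y l) + 0 * cmod (y l)" if "l \<in> P" for l
  proof -
    have "cmod (y l) / cmod (of_real l - z) \<le> cmod (y l) / d"
      using assms(1) assms(2)[OF that] by (intro divide_left_mono mult_pos_pos) auto
    then show ?thesis
      using that by (simp add: resolventK_def norm_divide)
  qed
  have R: "resolventK P z y \<in> l2 P"
    by (rule l2_dominated(1)[OF _ assms(3) assms(3) bound]) (simp add: resolventK_def)
  have bound_K: "cmod (multK (resolventK P z y) l) \<le> 1 * cmod (y l) + cmod z / d * cmod (y l)"
    if "l \<in> P" for l
  proof -
    have d: "0 < d" "d \<le> cmod (of_real l - z)"
      using assms that by auto
    have "cmod z = d * (cmod z / d)"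
      using d by simp
    also have "\<dots> \<le> cmod (of_real l - z) * (cmod z / d)"
      using d by (intro mult_right_mono) auto
    finally have "cmod (of_real l :: complex) \<le> cmod (of_real l - z) * (1 + cmod z / d)"
      using norm_triangle_ineq[of "of_real l - z" z] by (simp add: distrib_left)
    then have ratio: "cmod (of_real l :: complex) / cmod (of_real l - z) \<le> 1 + cmod z / d"
      using d by (simp add: divide_le_eq mult.commute)
    have "cmod (multK (resolventK P z y) l) = cmod (of_real l :: complex) / cmod (of_real l - z) * cmod (y l)"
      using that by (simp add: resolventK_def multK_def norm_mult norm_divide)
    also have "\<dots> \<le> (1 + cmod z / d) * cmod (y l)"
      by (rule mult_right_mono[OF ratio norm_ge_zero])
    finally show ?thesis
      by (simp add: distrib_right)
  qed
  have "multK (resolventK P z y) \<in> l2 P"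
    by (rule l2_dominated(1)[OF _ assms(3) assms(3) bound_K]) (simp add: resolventK_def multK_def)
  with R show ?thesis
    by (simp add: domK_def)
qed

section \<open>The shifted pencil \<open>A + t B - z\<close>\<close>

abbreviation pencil :: "real set \<Rightarrow> (real \<Rightarrow> complex) \<Rightarrow> real \<Rightarrow> vecT \<Rightarrow> vecT" where
  "pencil P v t \<equiv> \<lambda>u. addT (opA P v u) (scaleT (complex_of_real t) (opB u))"

definition pencil_minus :: "real set \<Rightarrow> (real \<Rightarrow> complex) \<Rightarrow> real \<Rightarrow> complex \<Rightarrow> vecT \<Rightarrow> vecT" where
  "pencil_minus P v t z u =
     (\<lambda>l. (of_real l - z) * fst u l + snd u * v l, l2inner P v (fst u) + (of_real t - z) * snd u)"

lemma specT_pencil_iff: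
  "z \<in> specT P D (pencil P v t) \<longleftrightarrow>
     \<not> (bij_betw (pencil_minus P v t z) D (Ht P) \<and>
        (\<exists>C. \<forall>u\<in>D. normT P u \<le> C * normT P (pencil_minus P v t z u)))"
proof -
  have "addT (pencil P v t u) (scaleT (- z) u) = pencil_minus P v t z u" for u
    by (simp add: addT_def scaleT_def opA_def opB_def pencil_minus_def multK_def fun_eq_iff algebra_simps)
  then show ?thesis
    by (simp add: specT_def)
qed

lemma pencil_minus_in_Ht:
  assumes "v \<in> l2 P" "x \<in> domK P"
  shows "pencil_minus P v t z (x, a) \<in> Ht P"
proof -
  have "(\<lambda>l. 1 * multK x l + (- z) * x l) \<in> l2 P"
    using assms(2) by (intro l2_lincomb) (auto simp: domK_def)
  then have "(\<lambda>l. 1 * (1 * multK x l + (- z) * x l) + a * v l) \<in> l2 P"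
    using assms(1) by (rule l2_lincomb)
  moreover have "(\<lambda>l. 1 * (1 * multK x l + (- z) * x l) + a * v l) = fst (pencil_minus P v t z (x, a))"
    by (simp add: pencil_minus_def multK_def fun_eq_iff algebra_simps)
  ultimately show ?thesis
    by (simp add: Ht_def mem_Times_iff)
qed

lemma pencil_minus_diff_eq_zero:
  assumes "v \<in> l2 P" "x1 \<in> l2 P" "x2 \<in> l2 P"
    and "pencil_minus P v t z (x1, a1) = pencil_minus P v t z (x2, a2)"
  shows "pencil_minus P v t z (\<lambda>l. x1 l - x2 l, a1 - a2) = (\<lambda>_. 0, 0)"
proof -
  let ?S = "pencil_minus P v t z"
  have "l2inner P v (\<lambda>l. x1 l - x2 l) = l2inner P v x1 - l2inner P v x2"
    using l2inner_lincomb[OF assms(1-3), of 1 "- 1"] by simp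
  then have "snd (?S (\<lambda>l. x1 l - x2 l, a1 - a2)) = snd (?S (x1, a1)) - snd (?S (x2, a2))"
    by (simp add: pencil_minus_def algebra_simps)
  moreover have "fst (?S (\<lambda>l. x1 l - x2 l, a1 - a2)) l = fst (?S (x1, a1)) l - fst (?S (x2, a2)) l" for l
    by (simp add: pencil_minus_def algebra_simps)
  ultimately show ?thesis
    using assms(4) by (simp add: prod_eq_iff fun_eq_iff)
qed

lemma pencil_minus_psi:
  assumes "l \<in> P"
  shows "pencil_minus P v t z (psi l, 0) = (\<lambda>k. (of_real l - z) * psi l k, cnj (v l))"
  using l2inner_psi[OF assms, of v] by (simp add: pencil_minus_def fun_eq_iff) (simp add: psi_def)

lemma inj_on_pencil_minus_if_bounded_below:
  assumes v: "v \<in> l2 P"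
    and bounded: "\<And>u. u \<in> domK P \<times> UNIV \<Longrightarrow> (normT P u)\<^sup>2 \<le> M * (normT P (pencil_minus P v t z u))\<^sup>2"
  shows "inj_on (pencil_minus P v t z) (domK P \<times> UNIV)"
proof (rule inj_onI, clarify)
  fix x1 a1 x2 a2
  assume x: "x1 \<in> domK P" "x2 \<in> domK P"
    and eq: "pencil_minus P v t z (x1, a1) = pencil_minus P v t z (x2, a2)"
  define dx where "dx = (\<lambda>l. x1 l - x2 l)"
  have dx: "dx \<in> domK P"
    using domK_lincomb[OF x, of 1 "- 1"] by (simp add: dx_def)
  have "(normT P (dx, a1 - a2))\<^sup>2 \<le> 0"
    using bounded[of "(dx, a1 - a2)"] dx pencil_minus_diff_eq_zero[OF v _ _ eq] x
    by (simp add: dx_def domK_def normT_sq)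
  then have "l2sq P dx = 0" "(cmod (a1 - a2))\<^sup>2 = 0"
    using l2sq_nonneg[of P dx] zero_le_power2[of "cmod (a1 - a2)"]
    unfolding normT_sq fst_conv snd_conv by linarith+
  moreover have "x1 l = x2 l" for l
    using l2sq_eq_0_imp_zero[of dx P l] dx \<open>l2sq P dx = 0\<close> by (simp add: dx_def domK_def)
  ultimately show "x1 = x2 \<and> a1 = a2"
    by auto
qed

lemma notin_specT_if_bounded_below_surj:
  assumes v: "v \<in> l2 P"
    and bounded: "\<And>u. u \<in> domK P \<times> UNIV \<Longrightarrow> (normT P u)\<^sup>2 \<le> M * (normT P (pencil_minus P v t z u))\<^sup>2"
    and surj: "\<And>y b. y \<in> l2 P \<Longrightarrow> \<exists>x\<in>domK P. \<exists>a. pencil_minus P v t z (x, a) = (y, b)"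
  shows "z \<notin> specT P (domK P \<times> UNIV) (pencil P v t)"
proof -
  have "inj_on (pencil_minus P v t z) (domK P \<times> UNIV)"
    using v bounded by (rule inj_on_pencil_minus_if_bounded_below)
  moreover have "pencil_minus P v t z ` (domK P \<times> UNIV) = Ht P"
  proof
    show "pencil_minus P v t z ` (domK P \<times> UNIV) \<subseteq> Ht P"
      using pencil_minus_in_Ht[OF v] by auto
    show "Ht P \<subseteq> pencil_minus P v t z ` (domK P \<times> UNIV)"
    proof (clarsimp simp: Ht_def)
      fix y b
      assume "y \<in> l2 P"
      then obtain x a where "x \<in> domK P" "pencil_minus P v t z (x, a) = (y, b)"
        using surj by blast
      then show "(y, b) \<in> pencil_minus P v t z ` (domK P \<times> UNIV)"
        by (metis SigmaI UNIV_I image_eqI)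
    qed
  qed
  moreover have "normT P u \<le> sqrt M * normT P (pencil_minus P v t z u)" if "u \<in> domK P \<times> UNIV" for u
  proof -
    have "normT P u = sqrt ((normT P u)\<^sup>2)"
      by (simp add: normT_def)
    also have "\<dots> \<le> sqrt (M * (normT P (pencil_minus P v t z u))\<^sup>2)"
      using bounded[OF that] by (rule real_sqrt_le_mono)
    also have "\<dots> = sqrt M * normT P (pencil_minus P v t z u)"
      by (simp add: real_sqrt_mult normT_def)
    finally show ?thesis .
  qed
  ultimately show ?thesis
    unfolding specT_pencil_iff bij_betw_def by blast
qed

definition weyl :: "real set \<Rightarrow> (real \<Rightarrow> complex) \<Rightarrow> complex \<Rightarrow> complex" where
  "weyl P v z = l2inner P v (resolventK P z v)"

lemma pencil_minus_resolventK:
  assumes d: "0 < d" "\<And>l. l \<in> P \<Longrightarrow> d \<le> cmod (of_real l - z)" and v: "v \<in> l2 P" and y: "y \<in> l2 P"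
  shows "pencil_minus P v t z (resolventK P z (\<lambda>l. y l - a * v l), a) =
    (y, l2inner P v (resolventK P z y) + a * (of_real t - z - weyl P v z))"
proof -
  have R: "resolventK P z y \<in> l2 P" "resolventK P z v \<in> l2 P"
    using resolventK_in_domK[OF d] v y by (auto simp: domK_def)
  have "resolventK P z (\<lambda>l. y l - a * v l) = (\<lambda>l. 1 * resolventK P z y l + (- a) * resolventK P z v l)"
    by (simp add: resolventK_def fun_eq_iff diff_divide_distrib)
  then have snd: "l2inner P v (resolventK P z (\<lambda>l. y l - a * v l)) =
      l2inner P v (resolventK P z y) - a * weyl P v z"
    using l2inner_lincomb[OF v R, of 1 "- a"] by (simp add: weyl_def)
  have fst: "(of_real l - z) * resolventK P z (\<lambda>l. y l - a * v l) l + a * v l = y l" for l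
  proof (cases "l \<in> P")
    case True
    then have "of_real l - z \<noteq> 0"
      using d by fastforce
    with True show ?thesis
      by (simp add: resolventK_def)
  next
    case False
    then show ?thesis
      using l2_vanishes[OF v False] l2_vanishes[OF y False] by (simp add: resolventK_def)
  qed
  show ?thesis
    using fst snd by (simp add: pencil_minus_def fun_eq_iff algebra_simps)
qed

lemma pencil_minus_surj_off_weyl:
  assumes d: "0 < d" "\<And>l. l \<in> P \<Longrightarrow> d \<le> cmod (of_real l - z)" and v: "v \<in> l2 P"
    and "of_real t - z \<noteq> weyl P v z" and y: "y \<in> l2 P"
  shows "\<exists>x\<in>domK P. \<exists>a. pencil_minus P v t z (x, a) = (y, b)"
proof -
  define a where "a = (b - l2inner P v (resolventK P z y)) / (of_real t - z - weyl P v z)"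
  have "(\<lambda>l. y l - a * v l) \<in> l2 P"
    using l2_lincomb[OF y v, of 1 "- a"] by simp
  then have "resolventK P z (\<lambda>l. y l - a * v l) \<in> domK P"
    by (intro resolventK_in_domK[OF d]) simp
  moreover have "pencil_minus P v t z (resolventK P z (\<lambda>l. y l - a * v l), a) =
      (y, l2inner P v (resolventK P z y) + a * (of_real t - z - weyl P v z))"
    by (rule pencil_minus_resolventK[OF d v y])
  moreover have "l2inner P v (resolventK P z y) + a * (of_real t - z - weyl P v z) = b"
    using assms(4) by (simp add: a_def)
  ultimately show ?thesis
    by blast
qed

lemma pencil_minus_kernel_at_weyl:
  assumes d: "0 < d" "\<And>l. l \<in> P \<Longrightarrow> d \<le> cmod (of_real l - z)" and v: "v \<in> l2 P"
    and "of_real t - z = weyl P v z"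
  shows "\<exists>x\<in>domK P. pencil_minus P v t z (x, 1) = (\<lambda>_. 0, 0)"
proof -
  have "(\<lambda>l. 0 - 1 * v l) \<in> l2 P"
    using l2_lincomb[OF v v, of 0 "- 1"] by simp
  then have "resolventK P z (\<lambda>l. 0 - 1 * v l) \<in> domK P"
    by (intro resolventK_in_domK[OF d]) simp
  moreover have "pencil_minus P v t z (resolventK P z (\<lambda>l. 0 - 1 * v l), 1) =
      (\<lambda>_. 0, l2inner P v (resolventK P z (\<lambda>_. 0)) + 1 * (of_real t - z - weyl P v z))"
    by (rule pencil_minus_resolventK[OF d v zero_in_l2])
  moreover have "resolventK P z (\<lambda>_. 0) = (\<lambda>_. 0)"
    by (simp add: resolventK_def fun_eq_iff)
  ultimately show ?thesis
    using assms(4) by (metis diff_self l2inner_zero mult_zero_right add_0)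
qed

lemma weyl_real:
  assumes "0 < d" "\<And>l. l \<in> P \<Longrightarrow> d \<le> cmod (of_real l - of_real r)" "v \<in> l2 P"
  shows "Im (weyl P v (of_real r)) = 0"
proof -
  have "resolventK P (of_real r) v \<in> l2 P"
    using resolventK_in_domK[OF assms] by (simp add: domK_def)
  then have "Im (weyl P v (of_real r)) = (\<Sum>\<^sub>\<infinity>l\<in>P. Im (cnj (v l) * resolventK P (of_real r) v l))"
    unfolding weyl_def l2inner_def by (intro infsum_Im[symmetric] l2_inner_summable assms(3))
  also have "\<dots> = 0"
    by (rule infsum_0) (simp add: resolventK_def cnj_mult_self flip: of_real_diff)
  finally show ?thesis .
qed

section \<open>Non-real points\<close>

lemma Im_l2inner_pencil_minus:
  fixes t :: real and z a :: complex
  assumes v: "v \<in> l2 P" and x: "x \<in> domK P"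
  defines "u \<equiv> pencil_minus P v t z (x, a)"
  shows "Im (l2inner P x (fst u) + cnj a * snd u) = - Im z * (normT P (x, a))\<^sup>2"
proof -
  have xl: "x \<in> l2 P"
    using x by (simp add: domK_def)
  have u: "fst u \<in> l2 P"
    using pencil_minus_in_Ht[OF v x] by (simp add: u_def Ht_def mem_Times_iff)
  have pointwise: "Im (cnj (x l) * fst u l) = Im (a * (cnj (x l) * v l)) + (- Im z) * (cmod (x l))\<^sup>2"
    for l
  proof -
    have "cnj (x l) * fst u l = (of_real l - z) * (cnj (x l) * x l) + a * (cnj (x l) * v l)"
      by (simp add: u_def pencil_minus_def algebra_simps)
    then show ?thesis
      by (simp add: cnj_mult_self)
  qed
  have sum_xv: "(\<lambda>l. a * (cnj (x l) * v l)) summable_on P"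
    by (intro summable_on_cmult_right l2_inner_summable xl v)
  have sum_x: "(\<lambda>l. (- Im z) * (cmod (x l))\<^sup>2) summable_on P"
    by (intro summable_on_cmult_right l2_summable xl)
  have "Im (l2inner P x (fst u)) = (\<Sum>\<^sub>\<infinity>l\<in>P. Im (a * (cnj (x l) * v l)) + (- Im z) * (cmod (x l))\<^sup>2)"
    unfolding l2inner_def pointwise[symmetric]
    by (rule infsum_Im[OF l2_inner_summable[OF xl u], symmetric])
  also have "\<dots> = Im (\<Sum>\<^sub>\<infinity>l\<in>P. a * (cnj (x l) * v l)) + (- Im z) * l2sq P x"
    unfolding infsum_add[OF summable_on_Im[OF sum_xv] sum_x] infsum_Im[OF sum_xv] l2sq_def
    by (simp only: infsum_cmult_right')
  also have "\<dots> = Im (a * l2inner P x v) - Im z * l2sq P x"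
    by (simp add: l2inner_def infsum_cmult_right')
  finally have "Im (l2inner P x (fst u)) = Im (a * cnj (l2inner P v x)) - Im z * l2sq P x"
    unfolding l2inner_swap[of P x v] .
  moreover have "Im (cnj a * snd u) = Im (cnj a * l2inner P v x) - Im z * (cmod a)\<^sup>2"
  proof -
    have "cnj a * snd u = cnj a * l2inner P v x + (of_real t - z) * (cnj a * a)"
      by (simp add: u_def pencil_minus_def algebra_simps)
    then show ?thesis
      by (simp add: cnj_mult_self)
  qed
  ultimately show ?thesis
    by (simp add: normT_sq algebra_simps)
qed

lemma pencil_minus_bounded_below_nonreal:
  assumes v: "v \<in> l2 P" and x: "x \<in> domK P"
  shows "(Im z)\<^sup>2 * (normT P (x, a))\<^sup>2 \<le> (normT P (pencil_minus P v t z (x, a)))\<^sup>2"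
proof (cases "Im z = 0")
  case False
  define u where "u = pencil_minus P v t z (x, a)"
  define s where "s = \<bar>Im z\<bar>"
  define N where "N = (normT P (x, a))\<^sup>2"
  have s: "0 < s"
    using False by (simp add: s_def)
  have xl: "x \<in> l2 P" and ul: "fst u \<in> l2 P"
    using x pencil_minus_in_Ht[OF v x] by (simp_all add: u_def domK_def Ht_def mem_Times_iff)
  have "s * N = \<bar>Im (l2inner P x (fst u) + cnj a * snd u)\<bar>"
    using Im_l2inner_pencil_minus[OF v x] by (simp add: u_def s_def N_def abs_mult)
  also have "\<dots> \<le> cmod (l2inner P x (fst u) + cnj a * snd u)"
    by (rule abs_Im_le_cmod)
  also have "\<dots> \<le> cmod (l2inner P x (fst u)) + cmod a * cmod (snd u)"
    using norm_triangle_ineq[of "l2inner P x (fst u)" "cnj a * snd u"] by (simp add: norm_mult)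
  also have "\<dots> \<le> (s * l2sq P x + l2sq P (fst u) / s) / 2 + (s * (cmod a)\<^sup>2 + (cmod (snd u))\<^sup>2 / s) / 2"
    using cmod_l2inner_le_weighted[OF xl ul s] mult_le_weighted_sum_squares[OF s] by (intro add_mono)
  also have "\<dots> = (s * N + (normT P u)\<^sup>2 / s) / 2"
    by (simp add: N_def normT_sq add_divide_distrib distrib_left)
  finally have "s * (s * N) \<le> (normT P u)\<^sup>2"
    using s by (simp add: field_simps)
  then show ?thesis
    by (simp add: u_def s_def N_def power2_eq_square mult.assoc)
qed simp

lemma nonreal_notin_specT:
  assumes v: "v \<in> l2 P" and "Im z \<noteq> 0"
  shows "z \<notin> specT P (domK P \<times> UNIV) (pencil P v t)"
proof -
  have bounded: "(normT P u)\<^sup>2 \<le> 1 / (Im z)\<^sup>2 * (normT P (pencil_minus P v t z u))\<^sup>2"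
    if "u \<in> domK P \<times> UNIV" for u
    using pencil_minus_bounded_below_nonreal[OF v, of "fst u" z "snd u" t] that assms(2)
    by (auto simp: field_simps)
  have gap: "\<bar>Im z\<bar> \<le> cmod (of_real l - z)" for l
    using abs_Im_le_cmod[of "of_real l - z"] by simp
  have "of_real t - z \<noteq> weyl P v z"
  proof
    assume "of_real t - z = weyl P v z"
    then obtain x where "x \<in> domK P" "pencil_minus P v t z (x, 1) = (\<lambda>_. 0, 0)"
      using pencil_minus_kernel_at_weyl[OF _ gap v] assms(2) by auto
    then have "(normT P (x, 1))\<^sup>2 \<le> 0"
      using bounded[of "(x, 1)"] by (simp add: normT_sq)
    then show False
      using l2sq_nonneg[of P x] by (simp add: normT_sq)
  qed
  then show ?thesis
    using assms pencil_minus_surj_off_weyl[OF _ gap v] bounded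
    by (intro notin_specT_if_bounded_below_surj[OF v, of "1 / (Im z)\<^sup>2"]) auto
qed

section \<open>Points of \<open>P\<close>\<close>

lemma pencil_minus_surj_eigenvalue:
  assumes v: "v \<in> l2 P" and l0: "l0 \<in> P" "v l0 \<noteq> 0"
    and d: "0 < d" "\<And>l. l \<in> P - {l0} \<Longrightarrow> d \<le> cmod (of_real l - of_real l0)"
    and y: "y \<in> l2 P"
  shows "\<exists>x\<in>domK P. \<exists>a. pencil_minus P v t (of_real l0) (x, a) = (y, b)"
proof -
  define a where "a = y l0 / v l0"
  define g where "g = (\<lambda>l. if l \<in> P - {l0} then y l - a * v l else 0)"
  have "(\<lambda>l. y l - a * v l) \<in> l2 P"
    using l2_lincomb[OF y v, of 1 "- a"] by simp
  then have "g \<in> l2 (P - {l0})"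
    unfolding g_def by (rule l2_restrict) auto
  define x' where "x' = resolventK (P - {l0}) (of_real l0) g"
  have x': "x' \<in> domK P"
    unfolding x'_def by (rule domK_mono[OF _ resolventK_in_domK[OF d \<open>g \<in> l2 (P - {l0})\<close>]]) auto
  define x0 where "x0 = (b - (of_real t - of_real l0) * a - l2inner P v x') / cnj (v l0)"
  define x where "x = (\<lambda>l. 1 * x' l + x0 * psi l0 l)"
  have "x \<in> domK P"
    unfolding x_def using x' psi_in_domK[OF l0(1)] by (rule domK_lincomb)
  moreover have "l2inner P v x = l2inner P v x' + x0 * cnj (v l0)"
    using l2inner_lincomb[OF v _ psi_in_l2[OF l0(1)], of x' 1 x0] x' l2inner_psi[OF l0(1)]
    by (simp add: x_def domK_def)
  moreover have "(of_real l - of_real l0) * x l + a * v l = y l" for l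
    using l0 l2_vanishes[OF v] l2_vanishes[OF y]
    by (cases "l = l0") (auto simp: a_def x_def x'_def resolventK_def g_def psi_def)
  ultimately show ?thesis
    using l0 by (intro bexI[of _ x] exI[of _ a]) (simp_all add: pencil_minus_def fun_eq_iff x0_def)
qed

lemma eigenvalue_coefficient_bound:
  assumes v: "v \<in> l2 P" and x: "x \<in> domK P" and l0: "l0 \<in> P"
  shows "(cmod a)\<^sup>2 * (cmod (v l0))\<^sup>2 \<le> (normT P (pencil_minus P v t (of_real l0) (x, a)))\<^sup>2"
proof -
  let ?y = "fst (pencil_minus P v t (of_real l0) (x, a))"
  have "?y \<in> l2 P"
    using pencil_minus_in_Ht[OF v x] by (simp add: Ht_def mem_Times_iff)
  then have "(cmod (?y l0))\<^sup>2 \<le> l2sq P ?y"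
    using l0 by (rule norm_le_l2sq)
  then show ?thesis
    by (simp add: pencil_minus_def normT_sq norm_mult power_mult_distrib add_increasing2)
qed

lemma eigenvalue_off_diagonal_bound:
  assumes v: "v \<in> l2 P" and x: "x \<in> domK P"
    and d: "0 < d" "\<And>l. l \<in> P - {l0} \<Longrightarrow> d \<le> cmod (of_real l - of_real l0)"
  defines "x' \<equiv> \<lambda>l. if l = l0 then 0 else x l"
  shows "l2sq P x' \<le> 2 / d\<^sup>2 * ((normT P (pencil_minus P v t (of_real l0) (x, a)))\<^sup>2 + (cmod a)\<^sup>2 * l2sq P v)"
proof -
  let ?y = "fst (pencil_minus P v t (of_real l0) (x, a))"
  have y: "?y \<in> l2 P"
    using pencil_minus_in_Ht[OF v x] by (simp add: Ht_def mem_Times_iff)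
  have bound: "cmod (x' l) \<le> 1 / d * cmod (?y l) + cmod a / d * cmod (v l)" if "l \<in> P" for l
  proof (cases "l = l0")
    case False
    have "d * cmod (x l) \<le> cmod (of_real l - of_real l0) * cmod (x l)"
      using d(2)[of l] that False by (intro mult_right_mono) auto
    also have "\<dots> = cmod (?y l - a * v l)"
      by (simp add: pencil_minus_def norm_mult)
    also have "\<dots> \<le> cmod (?y l) + cmod a * cmod (v l)"
      using norm_triangle_ineq4[of "?y l" "a * v l"] by (simp add: norm_mult)
    finally show ?thesis
      using d(1) False by (simp add: x'_def field_simps)
  qed (use d(1) in \<open>simp add: x'_def\<close>)
  have "x' l = 0" if "l \<notin> P" for l
    using x l2_vanishes[OF _ that, of x] by (simp add: x'_def domK_def)
  from l2_dominated[OF this y v bound]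
  have le: "l2sq P x' \<le> 2 / d\<^sup>2 * (l2sq P ?y + (cmod a)\<^sup>2 * l2sq P v)"
    using d(1) by (simp add: power_divide field_simps)
  have "l2sq P ?y \<le> (normT P (pencil_minus P v t (of_real l0) (x, a)))\<^sup>2"
    by (simp add: normT_sq)
  then have "2 / d\<^sup>2 * (l2sq P ?y + (cmod a)\<^sup>2 * l2sq P v)
      \<le> 2 / d\<^sup>2 * ((normT P (pencil_minus P v t (of_real l0) (x, a)))\<^sup>2 + (cmod a)\<^sup>2 * l2sq P v)"
    by (intro mult_left_mono) auto
  with le show ?thesis
    by linarith
qed

lemma eigenvalue_diagonal_bound:
  assumes v: "v \<in> l2 P" and x: "x \<in> domK P" and l0: "l0 \<in> P"
  defines "x' \<equiv> \<lambda>l. if l = l0 then 0 else x l"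
  shows "(cmod (x l0))\<^sup>2 * (cmod (v l0))\<^sup>2 \<le> 2 * (normT P (pencil_minus P v t (of_real l0) (x, a)))\<^sup>2
    + 4 * l2sq P v * l2sq P x' + 4 * (cmod (of_real t - of_real l0 :: complex))\<^sup>2 * (cmod a)\<^sup>2"
proof -
  let ?\<beta> = "snd (pencil_minus P v t (of_real l0) (x, a))"
  define w where "w = l2inner P v x' + (of_real t - of_real l0) * a"
  have xl: "x \<in> l2 P"
    using x by (simp add: domK_def)
  have decomp: "x' = (\<lambda>l. 1 * x l + (- x l0) * psi l0 l)"
    by (simp add: x'_def psi_def fun_eq_iff)
  have x'l: "x' \<in> l2 P"
    unfolding decomp using xl psi_in_l2[OF l0] by (rule l2_lincomb)
  have "l2inner P v x' = l2inner P v x - x l0 * cnj (v l0)"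
    unfolding decomp using l2inner_lincomb[OF v xl psi_in_l2[OF l0], of 1 "- x l0"] l2inner_psi[OF l0]
    by simp
  then have "x l0 * cnj (v l0) = ?\<beta> + (- w)"
    by (simp add: w_def pencil_minus_def)
  then have "(cmod (x l0))\<^sup>2 * (cmod (v l0))\<^sup>2 = (cmod (?\<beta> + (- w)))\<^sup>2"
    by (metis complex_mod_cnj norm_mult power_mult_distrib)
  also have "\<dots> \<le> 2 * (cmod ?\<beta>)\<^sup>2 + 2 * (cmod w)\<^sup>2"
    using norm_add_sq_le[of ?\<beta> "- w"] by simp
  finally have "(cmod (x l0))\<^sup>2 * (cmod (v l0))\<^sup>2 \<le> 2 * (cmod ?\<beta>)\<^sup>2 + 2 * (cmod w)\<^sup>2" .
  moreover have "(cmod w)\<^sup>2 \<le> 2 * (cmod (l2inner P v x'))\<^sup>2 + 2 * (cmod ((of_real t - of_real l0) * a))\<^sup>2"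
    unfolding w_def by (rule norm_add_sq_le)
  moreover have "(cmod (l2inner P v x'))\<^sup>2 \<le> l2sq P v * l2sq P x'"
    by (rule cmod_l2inner_sq_le[OF v x'l])
  moreover have "(cmod ?\<beta>)\<^sup>2 \<le> (normT P (pencil_minus P v t (of_real l0) (x, a)))\<^sup>2"
    by (simp add: normT_sq l2sq_nonneg)
  ultimately show ?thesis
    by (simp add: norm_mult power_mult_distrib)
qed

lemma pencil_minus_bounded_below_eigenvalue:
  assumes v: "v \<in> l2 P" and l0: "l0 \<in> P" "v l0 \<noteq> 0"
    and d: "0 < d" "\<And>l. l \<in> P - {l0} \<Longrightarrow> d \<le> cmod (of_real l - of_real l0)"
  shows "\<exists>M. \<forall>u\<in>domK P \<times> UNIV.
    (normT P u)\<^sup>2 \<le> M * (normT P (pencil_minus P v t (of_real l0) u))\<^sup>2"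
proof -
  define W V T where "W = (cmod (v l0))\<^sup>2" and "V = l2sq P v"
    and "T = (cmod (of_real t - of_real l0 :: complex))\<^sup>2"
  define c' where "c' = 2 / d\<^sup>2 * (1 + V / W)"
  define c0 where "c0 = (2 + 4 * V * c' + 4 * T / W) / W"
  have W: "0 < W"
    using l0 by (simp add: W_def)
  have V: "0 \<le> V"
    by (simp add: V_def l2sq_nonneg)
  have "(normT P (x, a))\<^sup>2 \<le> (2 * c' + 2 * c0 + 1 / W) * (normT P (pencil_minus P v t (of_real l0) (x, a)))\<^sup>2"
    if x: "x \<in> domK P" for x a
  proof -
    define Y where "Y = (normT P (pencil_minus P v t (of_real l0) (x, a)))\<^sup>2"
    define x' where "x' = (\<lambda>l. if l = l0 then 0 else x l)"
    have "(cmod a)\<^sup>2 * W \<le> Y"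
      using eigenvalue_coefficient_bound[OF v x l0(1)] by (simp add: W_def Y_def)
    then have a: "(cmod a)\<^sup>2 \<le> Y / W"
      using W by (simp add: field_simps)
    have "l2sq P x' \<le> 2 / d\<^sup>2 * (Y + (cmod a)\<^sup>2 * V)"
      using eigenvalue_off_diagonal_bound[OF v x d] by (simp add: x'_def Y_def V_def)
    also have "\<dots> \<le> 2 / d\<^sup>2 * (Y + Y / W * V)"
      using a V by (intro mult_left_mono add_left_mono mult_right_mono) auto
    also have "\<dots> = c' * Y"
      by (simp add: c'_def field_simps)
    finally have off: "l2sq P x' \<le> c' * Y" .
    have "(cmod (x l0))\<^sup>2 * W \<le> 2 * Y + 4 * V * l2sq P x' + 4 * T * (cmod a)\<^sup>2"
      using eigenvalue_diagonal_bound[OF v x l0(1)] by (simp add: W_def Y_def V_def T_def x'_def)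
    also have "\<dots> \<le> 2 * Y + 4 * V * (c' * Y) + 4 * T * (Y / W)"
      using off a V by (intro add_mono mult_left_mono) (auto simp: T_def)
    also have "\<dots> = c0 * Y * W"
      using W by (simp add: c0_def field_simps)
    finally have diag: "(cmod (x l0))\<^sup>2 \<le> c0 * Y"
      using W by simp
    have "l2sq P x \<le> 2 * l2sq P x' + 2 * (cmod (x l0))\<^sup>2"
      unfolding x'_def using x l0(1) by (intro l2sq_le_remove_point) (simp add: domK_def)
    then have "(normT P (x, a))\<^sup>2 \<le> 2 * (c' * Y) + 2 * (c0 * Y) + Y / W"
      using off diag a by (simp add: normT_sq)
    also have "\<dots> = (2 * c' + 2 * c0 + 1 / W) * Y"
      by (simp add: algebra_simps)
    finally show ?thesis
      unfolding Y_def .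
  qed
  then show ?thesis
    by blast
qed

lemma isolated_eigenvalue_notin_specT:
  assumes v: "v \<in> l2 P" and l0: "l0 \<in> P" "v l0 \<noteq> 0"
    and d: "0 < d" "\<And>l. l \<in> P - {l0} \<Longrightarrow> d \<le> cmod (of_real l - of_real l0)"
  shows "of_real l0 \<notin> specT P (domK P \<times> UNIV) (pencil P v t)"
proof -
  obtain M where
    "\<And>u. u \<in> domK P \<times> UNIV \<Longrightarrow> (normT P u)\<^sup>2 \<le> M * (normT P (pencil_minus P v t (of_real l0) u))\<^sup>2"
    using pencil_minus_bounded_below_eigenvalue[OF v l0 d] by blast
  then show ?thesis
    using pencil_minus_surj_eigenvalue[OF v l0 d] by (intro notin_specT_if_bounded_below_surj[OF v]) auto
qed

section \<open>Real points outside \<open>P\<close>\<close>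

lemma not_islimpt_gap:
  fixes r :: real
  assumes "\<not> r islimpt P"
  shows "\<exists>d>0. \<forall>l\<in>P - {r}. d \<le> cmod (of_real l - of_real r)"
proof -
  obtain d where "0 < d" "\<And>l. l \<in> P \<Longrightarrow> l \<noteq> r \<Longrightarrow> d \<le> dist l r"
    using assms unfolding islimpt_approachable by (auto simp: not_less)
  then show ?thesis
    by (auto simp: dist_real_def simp flip: of_real_diff)
qed

lemma gap_point_in_specT:
  assumes v: "v \<in> l2 P" and d: "0 < d" "\<And>l. l \<in> P \<Longrightarrow> d \<le> cmod (of_real l - of_real r)"
  shows "\<exists>t. of_real r \<in> specT P (domK P \<times> UNIV) (pencil P v t)"
proof
  define t where "t = r + Re (weyl P v (of_real r))"
  have "of_real t - of_real r = weyl P v (of_real r)"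
    using weyl_real[OF d v] by (simp add: t_def complex_eq_iff)
  then obtain x where x: "x \<in> domK P" "pencil_minus P v t (of_real r) (x, 1) = (\<lambda>_. 0, 0)"
    using pencil_minus_kernel_at_weyl[OF d v] by blast
  moreover have "pencil_minus P v t (of_real r) ((\<lambda>_. 0), 0) = (\<lambda>_. 0, 0)"
    by (simp add: pencil_minus_def l2inner_zero)
  ultimately have "\<not> inj_on (pencil_minus P v t (of_real r)) (domK P \<times> UNIV)"
  proof (intro notI)
    assume "inj_on (pencil_minus P v t (of_real r)) (domK P \<times> UNIV)"
    then have "(x, 1) = ((\<lambda>_. 0), 0::complex)"
      by (rule inj_onD) (use x zero_in_domK \<open>pencil_minus P v t (of_real r) ((\<lambda>_. 0), 0) = _\<close> in auto)
    then show False
      by simp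
  qed
  then show "of_real r \<in> specT P (domK P \<times> UNIV) (pencil P v t)"
    by (simp add: specT_pencil_iff bij_betw_def)
qed

lemma islimpt_small_coefficient:
  fixes r :: real
  assumes "v \<in> l2 P" "r islimpt P" "0 < e"
  shows "\<exists>l\<in>P. dist r l < e \<and> (cmod (v l))\<^sup>2 < e\<^sup>2"
proof -
  have "finite {l \<in> P. e\<^sup>2 \<le> (cmod (v l))\<^sup>2}"
    using assms by (intro finite_ge_if_summable l2_summable) auto
  moreover have "infinite (P \<inter> ball r e)"
    using assms(2,3) islimpt_eq_infinite_ball by blast
  ultimately have "infinite (P \<inter> ball r e - {l \<in> P. e\<^sup>2 \<le> (cmod (v l))\<^sup>2})"
    by (rule Diff_infinite_finite)
  then have "P \<inter> ball r e - {l \<in> P. e\<^sup>2 \<le> (cmod (v l))\<^sup>2} \<noteq> {}"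
    by (rule infinite_imp_nonempty)
  then show ?thesis
    by auto
qed

lemma normT_pencil_minus_psi:
  assumes "l \<in> P"
  shows "(normT P (pencil_minus P v t (of_real r) (psi l, 0)))\<^sup>2 = (dist r l)\<^sup>2 + (cmod (v l))\<^sup>2"
proof -
  have "cmod (of_real l - of_real r :: complex) = dist r l"
    by (simp add: dist_real_def abs_minus_commute flip: of_real_diff)
  with assms show ?thesis
    by (simp add: pencil_minus_psi normT_sq l2sq_scale l2sq_psi)
qed

lemma limit_point_in_specT:
  assumes v: "v \<in> l2 P" and "r islimpt P"
  shows "of_real r \<in> specT P (domK P \<times> UNIV) (pencil P v t)"
proof -
  have "\<not> (\<exists>C. \<forall>u\<in>domK P \<times> UNIV. normT P u \<le> C * normT P (pencil_minus P v t (of_real r) u))"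
  proof
    assume "\<exists>C. \<forall>u\<in>domK P \<times> UNIV. normT P u \<le> C * normT P (pencil_minus P v t (of_real r) u)"
    then obtain C
      where C: "\<And>u. u \<in> domK P \<times> UNIV \<Longrightarrow> normT P u \<le> C * normT P (pencil_minus P v t (of_real r) u)"
      by blast
    define e where "e = 1 / (2 * (\<bar>C\<bar> + 1))"
    have e: "0 < e"
      by (simp add: e_def add_pos_nonneg)
    obtain l where l: "l \<in> P" "dist r l < e" "(cmod (v l))\<^sup>2 < e\<^sup>2"
      using islimpt_small_coefficient[OF v \<open>r islimpt P\<close> e] by blast
    let ?Su = "pencil_minus P v t (of_real r) (psi l, 0)"
    have "(dist r l)\<^sup>2 < e\<^sup>2"
      using l(2) by (intro power_strict_mono) auto
    then have "(normT P ?Su)\<^sup>2 < e\<^sup>2 + e\<^sup>2"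
      using l by (simp add: normT_pencil_minus_psi)
    also have "\<dots> \<le> (2 * e)\<^sup>2"
      by (simp add: power_mult_distrib)
    finally have "normT P ?Su < 2 * e"
      by (rule power_less_imp_less_base) (use e in simp)
    have "1 = normT P (psi l, 0)"
      using l by (simp add: normT_eq l2sq_psi)
    also have "\<dots> \<le> C * normT P ?Su"
      using C l psi_in_domK by blast
    also have "\<dots> \<le> \<bar>C\<bar> * normT P ?Su"
      by (intro mult_right_mono) (auto simp: normT_def)
    also have "\<dots> \<le> \<bar>C\<bar> * (2 * e)"
      using \<open>normT P ?Su < 2 * e\<close> by (intro mult_left_mono) auto
    also have "\<dots> < 1"
      by (simp add: e_def field_simps)
    finally show False
      by simp
  qed
  then show ?thesis
    by (simp add: specT_pencil_iff)
qed

lemma specT_pencil_subset: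
  assumes "discrete P" "cyclic_vec P v" "z \<in> specT P (domK P \<times> UNIV) (pencil P v t)"
  shows "z \<in> complex_of_real ` (UNIV - P)"
proof -
  have v: "v \<in> l2 P"
    using assms(2) by (simp add: cyclic_vec_def)
  have "Im z = 0"
    using nonreal_notin_specT[OF v] assms(3) by blast
  then have z: "z = of_real (Re z)"
    by (simp add: complex_eq_iff)
  moreover have "Re z \<notin> P"
  proof
    assume r: "Re z \<in> P"
    then have "\<not> Re z islimpt P"
      using assms(1) discreteD isolated_in_islimpt_iff by blast
    then obtain d where d: "0 < d" "\<And>l. l \<in> P - {Re z} \<Longrightarrow> d \<le> cmod (of_real l - of_real (Re z))"
      using not_islimpt_gap by blast
    have "of_real (Re z) \<notin> specT P (domK P \<times> UNIV) (pencil P v t)"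
      by (rule isolated_eigenvalue_notin_specT[OF v r cyclic_vec_nonzero[OF assms(2) r] d])
    with assms(3) z show False
      by simp
  qed
  ultimately show ?thesis
    by blast
qed

lemma real_point_outside_in_specT:
  assumes v: "v \<in> l2 P" and "r \<notin> P"
  shows "\<exists>t. of_real r \<in> specT P (domK P \<times> UNIV) (pencil P v t)"
proof (cases "r islimpt P")
  case True
  then show ?thesis
    using limit_point_in_specT[OF v] by blast
next
  case False
  then obtain d where "0 < d" "\<And>l. l \<in> P - {r} \<Longrightarrow> d \<le> cmod (of_real l - of_real r)"
    using not_islimpt_gap by blast
  then show ?thesis
    using gap_point_in_specT[OF v, of d r] \<open>r \<notin> P\<close> by auto
qed

theorem lemma2p10:
  fixes P :: "real set" and v :: "real \<Rightarrow> complex"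
  assumes "countable P"
    and "discrete P"
    and "cyclic_vec P v"
  shows "(\<Union>t::real. specT P (domK P \<times> UNIV)
            (\<lambda>u. addT (opA P v u) (scaleT (complex_of_real t) (opB u))))
         = complex_of_real ` (UNIV - P)"
proof (intro equalityI subsetI)
  fix z
  assume "z \<in> (\<Union>t. specT P (domK P \<times> UNIV) (pencil P v t))"
  then show "z \<in> complex_of_real ` (UNIV - P)"
    using specT_pencil_subset[OF assms(2,3)] by blast
next
  fix z
  assume "z \<in> complex_of_real ` (UNIV - P)"
  moreover have "v \<in> l2 P"
    using assms(3) by (simp add: cyclic_vec_def)
  ultimately show "z \<in> (\<Union>t. specT P (domK P \<times> UNIV) (pencil P v t))"
    using real_point_outside_in_specT by blast
qed

end
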